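(* Let $\sigma$ be a permutation, $f\in\mathbb Z_{\ge1}$ a colour and $\iota\in[|\sigma|+1]$. Then $$\mathbb C(\sigma^{*\iota})(|\sigma|+1)=f\iff z_\sigma(f)\le\iota<z_\sigma(f-1).$$
   Context: The RITMO colouring $\mathbb C(\sigma):[|\sigma|]\to\mathbb Z_{\ge1}$ of a permutation $\sigma$ processes indices in decreasing order of value, giving each index $i$ the smallest positive integer $c$ such that no already coloured index $j<i$ has colour $c$ (equivalently: colour 1 on left-to-right maxima, colour 2 on the left-to-right maxima of the remaining entries, etc.). For $\sigma\in\mathcal S_m$ and $\iota\in[m+1]$, $\sigma^{*\iota}$ is the permutation of $[m+1]$ with entries in the same relative order as $\sigma(1),\dots,\sigma(m),\iota-1/2$. For a colour $f\ge1$: if some index of $\sigma$ has colour $f$ under $\mathbb C(\sigma)$, let $p$ be the largest such index and set $z_\sigma(f)=\sigma(p)+1$; otherwise $z_\sigma(f)=1$. By convention $z_\sigma(0)=|\sigma|+2$. *)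

theory Defs
  imports "HOL-Combinatorics.Permutations"
begin

text \<open>A permutation sigma of [m] = {1..m} is a function with sigma permutes {1..m}.
  Colourings are functions nat => nat; value 0 means "not (yet) coloured".\<close>

text \<open>Process the k largest values m, m-1, ..., m-k+1 in decreasing order; the index i
  holding the current value receives the least colour c >= 1 such that no already
  coloured index j < i has colour c.\<close>
primrec ritmo_aux :: "(nat \<Rightarrow> nat) \<Rightarrow> nat \<Rightarrow> nat \<Rightarrow> (nat \<Rightarrow> nat)" where
  "ritmo_aux \<sigma> m 0 = (\<lambda>i. 0)"
| "ritmo_aux \<sigma> m (Suc k) =
     (let C = ritmo_aux \<sigma> m k; i = inv_into {1..m} \<sigma> (m - k)
      in C(i := (LEAST c. 1 \<le> c \<and> \<not> (\<exists>j. j < i \<and> C j = c))))"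

definition ritmo :: "(nat \<Rightarrow> nat) \<Rightarrow> nat \<Rightarrow> (nat \<Rightarrow> nat)" where
  "ritmo \<sigma> m = ritmo_aux \<sigma> m m"

text \<open>sigma^{*iota}: permutation of [m+1] with entries in the same relative order as
  sigma(1),...,sigma(m), iota - 1/2 (identity outside [m+1]).\<close>
definition ins_perm :: "(nat \<Rightarrow> nat) \<Rightarrow> nat \<Rightarrow> nat \<Rightarrow> (nat \<Rightarrow> nat)" where
  "ins_perm \<sigma> m \<iota> = (\<lambda>i. if i \<in> {1..m} then (if \<sigma> i < \<iota> then \<sigma> i else \<sigma> i + 1)
                          else if i = m + 1 then \<iota> else i)"

definition zval :: "(nat \<Rightarrow> nat) \<Rightarrow> nat \<Rightarrow> nat \<Rightarrow> nat" where
  "zval \<sigma> m f =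
     (if f = 0 then m + 2
      else if \<exists>p\<in>{1..m}. ritmo \<sigma> m p = f
      then \<sigma> (Max {p\<in>{1..m}. ritmo \<sigma> m p = f}) + 1
      else 1)"

end

theory Submission
  imports Defs
begin

text \<open>When the value \<open>\<iota>\<close> is inserted at the new last position, every value of \<open>\<sigma>\<close> that is
  at least \<open>\<iota>\<close> moves up by one, so the RITMO colouring of \<open>\<sigma>\<^sup>*\<^sup>\<iota>\<close> agrees with that of \<open>\<sigma>\<close>
  until the value \<open>\<iota>\<close> is reached. At that moment all earlier positions are exactly those of \<open>\<sigma>\<close>
  carrying a value \<open>\<ge> \<iota>\<close>, so the last position receives the least colour not used on them.
  These colours form an initial segment \<open>{1..f-1}\<close>, because an index of colour \<open>c + 1\<close> is
  preceded by an index of colour \<open>c\<close> with a larger value; and colour \<open>g\<close> occurs among them iff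
  the last index of colour \<open>g\<close>, which carries the largest value of its colour class, has value
  \<open>\<ge> \<iota>\<close>, i.e. iff \<open>\<iota> < z\<^sub>\<sigma>(g)\<close>.\<close>

definition least_unused :: "(nat \<Rightarrow> bool) \<Rightarrow> nat" where
  "least_unused S = (LEAST c. 1 \<le> c \<and> \<not> S c)"

lemma ritmo_aux_Suc:
  "ritmo_aux s M (Suc k) =
     (let C = ritmo_aux s M k; i = inv_into {1..M} s (M - k)
      in C(i := least_unused (\<lambda>c. \<exists>j<i. C j = c)))"
  by (simp add: least_unused_def)

lemma exists_unused:
  fixes S :: "nat \<Rightarrow> bool"
  assumes "finite {c. S c}"
  shows "\<exists>c. 1 \<le> c \<and> \<not> S c"
proof -
  obtain c where "c \<notin> insert 0 {c. S c}"
    using ex_new_if_finite[OF infinite_UNIV_nat] assms by blast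
  then have "1 \<le> c \<and> \<not> S c" by auto
  then show ?thesis ..
qed

lemma least_unused:
  assumes "finite {c. S c}"
  shows "1 \<le> least_unused S" "\<not> S (least_unused S)"
  using LeastI_ex[OF exists_unused[OF assms]] unfolding least_unused_def by auto

lemma used_if_less_least_unused: "1 \<le> c \<Longrightarrow> c < least_unused S \<Longrightarrow> S c"
  unfolding least_unused_def using not_less_Least by blast

lemma least_unused_cong: "(\<And>c. 1 \<le> c \<Longrightarrow> S c = T c) \<Longrightarrow> least_unused S = least_unused T"
  unfolding least_unused_def by (rule arg_cong[where f = Least]) auto

lemma least_unused_eq_iff:
  assumes fin: "finite {c. S c}"
    and down: "\<And>c. 1 \<le> c \<Longrightarrow> S (Suc c) \<Longrightarrow> S c"
    and f: "1 \<le> f"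
  shows "least_unused S = f \<longleftrightarrow> \<not> S f \<and> (f = 1 \<or> S (f - 1))"
proof
  assume "least_unused S = f"
  moreover have "f = 1 \<or> 1 \<le> f - 1 \<and> f - 1 < f" using f by auto
  ultimately show "\<not> S f \<and> (f = 1 \<or> S (f - 1))"
    using least_unused(2)[OF fin] used_if_less_least_unused[of "f - 1" S] by auto
next
  assume h: "\<not> S f \<and> (f = 1 \<or> S (f - 1))"
  have used_below: "S c" if "1 \<le> c" "c < f" for c
  proof -
    have "c \<le> f - 1" using that by auto
    then show ?thesis
    proof (induction rule: inc_induct)
      case base
      show ?case using h that by auto
    next
      case (step n)
      then show ?case using \<open>1 \<le> c\<close> down[of n] by simp
    qed
  qed
  show "least_unused S = f"
    unfolding least_unused_def
  proof (rule Least_equality)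
    show "1 \<le> f \<and> \<not> S f" using f h by simp
    show "f \<le> c" if "1 \<le> c \<and> \<not> S c" for c
      using that used_below not_less by blast
  qed
qed

text \<open>State of the RITMO colouring once exactly the values above the threshold \<open>t\<close> have been
  processed.\<close>

definition ritmo_invariant :: "(nat \<Rightarrow> nat) \<Rightarrow> nat \<Rightarrow> nat \<Rightarrow> (nat \<Rightarrow> nat) \<Rightarrow> bool" where
  "ritmo_invariant s M t C \<longleftrightarrow>
     (\<forall>i. C i \<noteq> 0 \<longleftrightarrow> i \<in> {1..M} \<and> t < s i) \<and>
     (\<forall>i c. C i \<noteq> 0 \<longrightarrow> 1 \<le> c \<longrightarrow> c < C i \<longrightarrow> (\<exists>j<i. s i < s j \<and> C j = c)) \<and>
     (\<forall>i j. C i \<noteq> 0 \<longrightarrow> j < i \<longrightarrow> C j = C i \<longrightarrow> s j < s i)"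

lemma ritmo_invariant_step:
  assumes bij: "bij_betw s {1..M} {1..M}" and inv: "ritmo_invariant s M t C" and t: "t \<in> {1..M}"
  defines "x \<equiv> inv_into {1..M} s t"
  shows "ritmo_invariant s M (t - 1) (C(x := least_unused (\<lambda>c. \<exists>j<x. C j = c)))"
proof -
  define c0 where "c0 = least_unused (\<lambda>c. \<exists>j<x. C j = c)"
  have fin: "finite {c. \<exists>j<x. C j = c}" by (simp add: finite_image_set[of "\<lambda>j. j < x", simplified])
  have c0: "1 \<le> c0" "\<And>j. j < x \<Longrightarrow> C j \<noteq> c0" "\<And>c. 1 \<le> c \<Longrightarrow> c < c0 \<Longrightarrow> \<exists>j<x. C j = c"
    unfolding c0_def using least_unused[OF fin]
      used_if_less_least_unused[where S = "\<lambda>c. \<exists>j<x. C j = c"] by auto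
  have x: "x \<in> {1..M}" "s x = t"
    unfolding x_def using bij_betw_apply[OF bij_betw_inv_into[OF bij] t] bij_betw_inv_into_right[OF bij t]
    by auto
  have inj: "inj_on s {1..M}" using bij by (simp add: bij_betw_def)
  from inv have I1: "\<And>i. C i \<noteq> 0 \<longleftrightarrow> i \<in> {1..M} \<and> t < s i"
    and I2: "\<And>i c. C i \<noteq> 0 \<Longrightarrow> 1 \<le> c \<Longrightarrow> c < C i \<Longrightarrow> \<exists>j<i. s i < s j \<and> C j = c"
    and I3: "\<And>i j. C i \<noteq> 0 \<Longrightarrow> j < i \<Longrightarrow> C j = C i \<Longrightarrow> s j < s i"
    unfolding ritmo_invariant_def by auto
  have coloured_ne_x: "C i \<noteq> 0 \<Longrightarrow> i \<noteq> x" for i using I1 x by auto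
  have "(C(x := c0)) i \<noteq> 0 \<longleftrightarrow> i \<in> {1..M} \<and> t - 1 < s i" for i
  proof (cases "i = x")
    case True
    then show ?thesis using c0(1) x t by auto
  next
    case False
    then have "i \<in> {1..M} \<Longrightarrow> s i \<noteq> t" using inj_onD[OF inj _ _ x(1)] x(2) by metis
    then show ?thesis using False I1[of i] by auto
  qed
  moreover have "\<exists>j<i. s i < s j \<and> (C(x := c0)) j = c"
    if coloured: "(C(x := c0)) i \<noteq> 0" "1 \<le> c" "c < (C(x := c0)) i" for i c
  proof (cases "i = x")
    case True
    then obtain j where "j < x" "C j = c" using c0(3)[of c] coloured by auto
    moreover have "t < s j" using I1[of j] \<open>C j = c\<close> coloured(2) by auto
    ultimately show ?thesis using True x(2) by auto
  next
    case False
    then obtain j where "j < i" "s i < s j" "C j = c" using I2[of i c] coloured by auto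
    then show ?thesis using coloured(2) coloured_ne_x[of j] by auto
  qed
  moreover have "s j < s i"
    if "(C(x := c0)) i \<noteq> 0" "j < i" "(C(x := c0)) j = (C(x := c0)) i" for i j
  proof (cases "i = x")
    case True
    then show ?thesis using that c0(2)[of j] by auto
  next
    case False
    then have Ci: "C i \<noteq> 0" using that by auto
    show ?thesis
    proof (cases "j = x")
      case True
      then show ?thesis using I1[of i] Ci x(2) by auto
    next
      case False
      then show ?thesis using I3[OF Ci that(2)] that \<open>i \<noteq> x\<close> by auto
    qed
  qed
  ultimately show ?thesis unfolding ritmo_invariant_def c0_def[symmetric] by blast
qed

lemma ritmo_aux_invariant:
  assumes bij: "bij_betw s {1..M} {1..M}" and "k \<le> M"
  shows "ritmo_invariant s M (M - k) (ritmo_aux s M k)"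
  using assms(2)
proof (induction k)
  case 0
  have "\<not> M < s i" if "i \<in> {1..M}" for i using bij_betw_apply[OF bij that] by simp
  then show ?case by (auto simp: ritmo_invariant_def)
next
  case (Suc k)
  have "M - k \<in> {1..M}" using Suc.prems by auto
  from ritmo_invariant_step[OF bij Suc.IH[OF Suc_leD[OF Suc.prems]] this]
  show ?case by (simp only: ritmo_aux_Suc Let_def diff_Suc_eq_diff_pred diff_commute)
qed

lemma ritmo_invariant_ritmo:
  "bij_betw s {1..M} {1..M} \<Longrightarrow> ritmo_invariant s M 0 (ritmo s M)"
  using ritmo_aux_invariant[of s M M] by (simp add: ritmo_def)

lemma ritmo_aux_keeps_colour:
  assumes bij: "bij_betw s {1..M} {1..M}" and "k \<le> k'" "k' \<le> M"
    and coloured: "ritmo_aux s M k i \<noteq> 0"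
  shows "ritmo_aux s M k' i = ritmo_aux s M k i"
  using assms(2,3)
proof (induction k' rule: dec_induct)
  case (step n)
  then have "ritmo_aux s M n i \<noteq> 0" using coloured by simp
  then have "M - n < s i"
    using ritmo_aux_invariant[OF bij, of n] step by (auto simp: ritmo_invariant_def)
  moreover have "s (inv_into {1..M} s (M - n)) = M - n"
    using bij_betw_inv_into_right[OF bij, of "M - n"] step by auto
  ultimately have "inv_into {1..M} s (M - n) \<noteq> i" by auto
  then show ?case using step by (simp add: ritmo_aux_Suc Let_def)
qed simp

lemma ritmo_aux_colour_used_iff:
  assumes bij: "bij_betw s {1..M} {1..M}" and k: "k \<le> M" and c: "1 \<le> c"
  shows "(\<exists>j<M+1. ritmo_aux s M k j = c) \<longleftrightarrow> (\<exists>j\<in>{1..M}. M - k < s j \<and> ritmo s M j = c)"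
proof -
  have coloured: "ritmo_aux s M k j \<noteq> 0 \<longleftrightarrow> j \<in> {1..M} \<and> M - k < s j" for j
    using ritmo_aux_invariant[OF bij k] unfolding ritmo_invariant_def by blast
  have "ritmo_aux s M k j \<noteq> 0 \<Longrightarrow> ritmo s M j = ritmo_aux s M k j" for j
    using ritmo_aux_keeps_colour[OF bij k order_refl] unfolding ritmo_def by blast
  with coloured c show ?thesis
    by (metis atLeastAtMost_iff less_Suc_eq_le not_one_le_zero Suc_eq_plus1)
qed

lemma ritmo_invariant_colour_downward_closed:
  assumes inv: "ritmo_invariant s M t C"
    and used: "\<exists>j\<in>{1..M}. v \<le> s j \<and> C j = Suc c" and c: "1 \<le> c"
  shows "\<exists>j\<in>{1..M}. v \<le> s j \<and> C j = c"
proof -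
  obtain j where j: "j \<in> {1..M}" "v \<le> s j" "C j = Suc c" using used by blast
  then obtain j' where j': "s j < s j'" "C j' = c"
    using inv c unfolding ritmo_invariant_def by (metis lessI nat.distinct(1))
  then have "j' \<in> {1..M}" using inv c unfolding ritmo_invariant_def by auto
  with j(2) j' show ?thesis by (intro bexI[of _ j']) auto
qed

lemma ritmo_invariant_le_last_of_colour:
  assumes inv: "ritmo_invariant s M t C" and "C j = g" "g \<noteq> 0"
  shows "s j \<le> s (Max {p\<in>{1..M}. C p = g})"
proof -
  define A where "A = {p\<in>{1..M}. C p = g}"
  have "finite A" unfolding A_def by simp
  moreover have "j \<in> A" using assms unfolding A_def ritmo_invariant_def by auto
  ultimately have "Max A \<in> A" "j \<le> Max A" using Max_in Max_ge by blast+
  then show ?thesis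
  proof (cases "j = Max A")
    case False
    with \<open>j \<le> Max A\<close> have "j < Max A" by simp
    moreover have "C (Max A) \<noteq> 0" "C j = C (Max A)"
      using \<open>Max A \<in> A\<close> assms(2,3) unfolding A_def by auto
    ultimately have "s j < s (Max A)" using inv unfolding ritmo_invariant_def by blast
    then show ?thesis unfolding A_def by simp
  qed (simp add: A_def)
qed

lemma colour_used_from_iff_zval:
  assumes bij: "bij_betw \<sigma> {1..m} {1..m}" and g: "1 \<le> g" and \<iota>: "1 \<le> \<iota>"
  shows "(\<exists>j\<in>{1..m}. \<iota> \<le> \<sigma> j \<and> ritmo \<sigma> m j = g) \<longleftrightarrow> \<iota> < zval \<sigma> m g"
proof (cases "\<exists>p\<in>{1..m}. ritmo \<sigma> m p = g")
  case True
  define A where "A = {p\<in>{1..m}. ritmo \<sigma> m p = g}"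
  have "finite A" "A \<noteq> {}" using True unfolding A_def by auto
  then have last: "Max A \<in> A" by (rule Max_in)
  have le_last: "\<sigma> j \<le> \<sigma> (Max A)" if "ritmo \<sigma> m j = g" for j
    using ritmo_invariant_le_last_of_colour[OF ritmo_invariant_ritmo[OF bij] that] g
    unfolding A_def by simp
  have zval: "zval \<sigma> m g = \<sigma> (Max A) + 1" using True g unfolding zval_def A_def by simp
  show ?thesis
  proof
    assume "\<exists>j\<in>{1..m}. \<iota> \<le> \<sigma> j \<and> ritmo \<sigma> m j = g"
    then show "\<iota> < zval \<sigma> m g" using le_last zval by fastforce
  next
    assume "\<iota> < zval \<sigma> m g"
    then show "\<exists>j\<in>{1..m}. \<iota> \<le> \<sigma> j \<and> ritmo \<sigma> m j = g"
      using last zval by (intro bexI[of _ "Max A"]) (auto simp: A_def)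
  qed
qed (use g \<iota> in \<open>auto simp: zval_def\<close>)

lemma bij_betw_ins_perm:
  assumes \<sigma>: "\<sigma> permutes {1..m}" and \<iota>: "\<iota> \<in> {1..m+1}"
  shows "bij_betw (ins_perm \<sigma> m \<iota>) {1..m+1} {1..m+1}"
proof -
  have inj: "inj_on \<sigma> {1..m}" and into: "\<And>i. i \<in> {1..m} \<Longrightarrow> \<sigma> i \<in> {1..m}"
    using permutes_imp_bij[OF \<sigma>] by (auto simp: bij_betw_def)
  have "inj_on (ins_perm \<sigma> m \<iota>) {1..m+1}"
  proof (rule inj_onI)
    fix a b assume a: "a \<in> {1..m+1}" and b: "b \<in> {1..m+1}"
      and eq: "ins_perm \<sigma> m \<iota> a = ins_perm \<sigma> m \<iota> b"
    show "a = b"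
    proof (cases "a = m + 1 \<or> b = m + 1")
      case True
      then show ?thesis using a b eq unfolding ins_perm_def by (auto split: if_splits)
    next
      case False
      then have "a \<in> {1..m}" "b \<in> {1..m}" using a b by auto
      then show ?thesis using eq inj_onD[OF inj] unfolding ins_perm_def by (auto split: if_splits)
    qed
  qed
  moreover have "ins_perm \<sigma> m \<iota> ` {1..m+1} \<subseteq> {1..m+1}"
    using into \<iota> unfolding ins_perm_def by fastforce
  ultimately show ?thesis using endo_inj_surj[of "{1..m+1}"] by (auto simp: bij_betw_def)
qed

lemma ritmo_aux_ins_perm:
  assumes \<sigma>: "\<sigma> permutes {1..m}" and \<iota>: "\<iota> \<in> {1..m+1}" and "k \<le> m + 1 - \<iota>"
  shows "ritmo_aux (ins_perm \<sigma> m \<iota>) (m + 1) k = ritmo_aux \<sigma> m k"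
  using assms(3)
proof (induction k)
  case (Suc k)
  define x where "x = inv_into {1..m} \<sigma> (m - k)"
  have "m - k \<in> {1..m}" using Suc.prems \<iota> by auto
  then have x: "x \<in> {1..m}" "\<sigma> x = m - k"
    unfolding x_def using permutes_imp_bij[OF \<sigma>] bij_betw_inv_into_right bij_betw_inv_into bij_betw_apply
    by metis+
  have "ins_perm \<sigma> m \<iota> x = m + 1 - k" using x Suc.prems \<iota> unfolding ins_perm_def by auto
  then have "inv_into {1..m+1} (ins_perm \<sigma> m \<iota>) (m + 1 - k) = x"
    using x bij_betw_ins_perm[OF \<sigma> \<iota>] by (intro inv_into_f_eq) (auto simp: bij_betw_def)
  then show ?case using Suc by (simp add: ritmo_aux_Suc x_def)
qed simp

lemma ritmo_ins_perm_last:
  assumes \<sigma>: "\<sigma> permutes {1..m}" and \<iota>: "\<iota> \<in> {1..m+1}"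
  shows "ritmo (ins_perm \<sigma> m \<iota>) (m + 1) (m + 1) =
           least_unused (\<lambda>c. \<exists>j\<in>{1..m}. \<iota> \<le> \<sigma> j \<and> ritmo \<sigma> m j = c)"
proof -
  define \<tau> where "\<tau> = ins_perm \<sigma> m \<iota>"
  define K where "K = m + 1 - \<iota>"
  define C where "C = ritmo_aux \<sigma> m K"
  have bij\<sigma>: "bij_betw \<sigma> {1..m} {1..m}" using \<sigma> by (rule permutes_imp_bij)
  have bij\<tau>: "bij_betw \<tau> {1..m+1} {1..m+1}" unfolding \<tau>_def using bij_betw_ins_perm[OF \<sigma> \<iota>] .
  have "\<tau> (m + 1) = \<iota>" unfolding \<tau>_def ins_perm_def by simp
  then have last: "inv_into {1..m+1} \<tau> (m + 1 - K) = m + 1"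
    using \<iota> bij\<tau> unfolding K_def by (intro inv_into_f_eq) (auto simp: bij_betw_def)
  have same: "ritmo_aux \<tau> (m + 1) K = C"
    unfolding \<tau>_def C_def using ritmo_aux_ins_perm[OF \<sigma> \<iota>] by (simp add: K_def)
  have "ritmo_aux \<tau> (m + 1) (Suc K) = C(m + 1 := least_unused (\<lambda>c. \<exists>j<m+1. C j = c))"
    by (simp only: ritmo_aux_Suc Let_def last same)
  then have step: "ritmo_aux \<tau> (m + 1) (Suc K) (m + 1) = least_unused (\<lambda>c. \<exists>j<m+1. C j = c)"
    by simp
  have "ritmo_aux \<tau> (m + 1) (Suc K) (m + 1) \<noteq> 0"
    unfolding step using least_unused(1)[of "\<lambda>c. \<exists>j<m+1. C j = c"] by auto
  then have "ritmo \<tau> (m + 1) (m + 1) = least_unused (\<lambda>c. \<exists>j<m+1. C j = c)"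
    using ritmo_aux_keeps_colour[OF bij\<tau>, of "Suc K" "m + 1"] \<iota> step
    unfolding ritmo_def K_def by auto
  also have "\<dots> = least_unused (\<lambda>c. \<exists>j\<in>{1..m}. \<iota> \<le> \<sigma> j \<and> ritmo \<sigma> m j = c)"
  proof (rule least_unused_cong)
    fix c :: nat assume "1 \<le> c"
    have K: "K \<le> m" and "\<And>v. m - K < v \<longleftrightarrow> \<iota> \<le> v" using \<iota> unfolding K_def by auto
    then show "(\<exists>j<m+1. C j = c) \<longleftrightarrow> (\<exists>j\<in>{1..m}. \<iota> \<le> \<sigma> j \<and> ritmo \<sigma> m j = c)"
      using ritmo_aux_colour_used_iff[OF bij\<sigma> K \<open>1 \<le> c\<close>] unfolding C_def by simp
  qed
  finally show ?thesis unfolding \<tau>_def .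
qed

theorem mainTheorem16:
  fixes \<sigma> :: "nat \<Rightarrow> nat" and m f \<iota> :: nat
  assumes "\<sigma> permutes {1..m}"
    and "1 \<le> f"
    and "\<iota> \<in> {1..m+1}"
  shows "ritmo (ins_perm \<sigma> m \<iota>) (m + 1) (m + 1) = f \<longleftrightarrow>
           zval \<sigma> m f \<le> \<iota> \<and> \<iota> < zval \<sigma> m (f - 1)"
proof -
  define S where "S c \<longleftrightarrow> (\<exists>j\<in>{1..m}. \<iota> \<le> \<sigma> j \<and> ritmo \<sigma> m j = c)" for c
  have bij: "bij_betw \<sigma> {1..m} {1..m}" using assms(1) by (rule permutes_imp_bij)
  have "finite {c. S c}"
    by (rule finite_subset[of _ "ritmo \<sigma> m ` {1..m}"]) (auto simp: S_def)
  moreover have "\<And>c. 1 \<le> c \<Longrightarrow> S (Suc c) \<Longrightarrow> S c"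
    unfolding S_def using ritmo_invariant_colour_downward_closed[OF ritmo_invariant_ritmo[OF bij]] .
  ultimately have "ritmo (ins_perm \<sigma> m \<iota>) (m + 1) (m + 1) = f \<longleftrightarrow> \<not> S f \<and> (f = 1 \<or> S (f - 1))"
    using ritmo_ins_perm_last[OF assms(1,3)] least_unused_eq_iff[OF _ _ assms(2)]
    unfolding S_def by simp
  also have "\<dots> \<longleftrightarrow> zval \<sigma> m f \<le> \<iota> \<and> \<iota> < zval \<sigma> m (f - 1)"
    using colour_used_from_iff_zval[OF bij] assms(2,3) by (auto simp: S_def zval_def not_less)
  finally show ?thesis .
qed

end
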